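(* Let $q$ be a query program, $P$ a partial model, $\mathcal{T}$ a theory, and $P',\mathcal{T}'$ the partial model and theory produced by the witness-generation construction. If $M=\langle O_M,I_M,\mathcal{S}_M\rangle\in\mathit{solutions}(P,\mathcal{T})$, then there exist a renaming of variables $\mathit{rename}:\mathcal{X}\to\mathcal{X}$ stationary with respect to $\mathcal{T}$ and a model $M'\in\mathit{solutions}(P',\mathcal{T}')$ such that $M^{\mathit{rename}}\succcurlyeq M'$ and $\mathit{DS}_M(M)=\mathit{DS}_M(M')=g_{\mathrm{witness}}(M')$, where $\mathit{DS}_M(N)=\max_{k\vDash\mathcal{S}_{\mathrm{IPET}}\cup\mathcal{S}_{\mathrm{flow}}(N)}g_{\mathrm{IPET}}(k)$ and $g_{\mathrm{witness}}(N)=\max_{k\vDash\mathcal{S}_N}g_{\mathrm{IPET}}(k)$ for concrete $N$.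
   Context: Linear systems. Fix a large finite reserve $\mathcal{X}$ of integer variables. A system of linear inequalities $\mathcal{S}$ is a finite set of inequalities $\sum_j a_{ij}x_j\le y_i$ (equations are written as pairs of inequalities). A valuation $k:\mathcal{X}\to\mathbb{Z}$ is a solution of $\mathcal{S}$ ($k\vDash\mathcal{S}$) if it satisfies all of them; $\mathcal{S}_1\vDash\mathcal{S}_2$ means every solution of $\mathcal{S}_1$ is a solution of $\mathcal{S}_2$. Models. A metamodel is a signature $\Sigma$ of unary class symbols, binary relation symbols, a unary existence symbol $\varepsilon$ and a binary equality symbol $\sim$. A (scoped) partial model $P=\langle O_P,I_P,\mathcal{S}_P\rangle$ consists of a finite object set $O_P$, a 3-valued interpretation $I_P(\sigma):O_P^{\mathrm{arity}(\sigma)}\to\{0,1,\tfrac12\}$ for each $\sigma\in\Sigma$ ($\tfrac12$ = unknown), and a scope $\mathcal{S}_P$ (a system of linear inequalities). $P$ is concrete if all values are $0$ or $1$, $I_P(\varepsilon)(o)=1$ for all $o$, $I_P(\sim)(o_1,o_2)=1$ iff $o_1=o_2$, and $\mathcal{S}_P$ has a solution. Refinement: for $\mathit{abs}:O_Q\to O_P$, $P\succcurlyeq_{\mathit{abs}}Q$ holds if for all $\sigma$ and tuples $\bar q$, $I_P(\sigma)(\mathit{abs}(\bar q))$ is $\tfrac12$ or equals $I_Q(\sigma)(\bar q)$; every $p$ with $I_P(\varepsilon)(p)=1$ has a preimage under $\mathit{abs}$; and $\mathcal{S}_Q\vDash\mathcal{S}_P$. $P\succcurlyeq Q$ if $P\succcurlyeq_{\mathit{abs}}Q$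 for some $\mathit{abs}$. For a first-order predicate $\varphi$ over $\Sigma$ with free variables $v_1,\dots,v_n$ and a concrete model $M$, $M\#\varphi$ is the number of maps $Z:\{v_1,\dots,v_n\}\to O_M$ under which $\varphi$ is true in $M$. A theory $\mathcal{T}=\langle\Phi,r\rangle$ is a finite set $\Phi$ of predicates with a map $r:\Phi\to\mathcal{X}$; a concrete $M$ is compatible with it ($M\vDash\mathcal{T}$) if $\mathcal{S}_M\vDash r(\varphi)=M\#\varphi$ for all $\varphi\in\Phi$. $\mathit{solutions}(P,\mathcal{T})$ is the set of concrete models $M$ with $P\succcurlyeq M$ and $M\vDash\mathcal{T}$. Renaming. A map $\mathit{rename}:\mathcal{X}\to\mathcal{X}$ is a renaming of variables if it is bijective; it is stationary with respect to $\mathcal{T}=\langle\Phi,r\rangle$ if $\mathit{rename}(r(\varphi))=r(\varphi)$ for all $\varphi\in\Phi$. For a partial model $P=\langle O_P,I_P,\mathcal{S}_P\rangle$, its renaming is $P^{\mathit{rename}}=\langle O_P,I_P,\mathcal{S}_P^{\mathit{rename}}\rangle$, where $\mathcal{S}_P^{\mathit{rename}}$ is obtained from $\mathcal{S}_P$ by replacing each variable $x$ with $\mathit{rename}(x)$. Program and IPET. $q$ is a query program generated from a graph-query search plan: structured code of nested for-loops and if-statements, where each for-loop implements an extend constraint ($C(v)$ with $v$ new, or $R(v_i,v_j)$ with $v_j$ new; it iterates over all candidate bindings of the new variable) and each if-statement implements a check constraint ($C(v_i)$, $R(v_i,v_j)$, $v_i=v_j$, or their negations, over bound variables). $\mathit{BB}$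 is its set of basic blocks; its weighted CFG is $\langle V,E,s,t,w,\mathit{tr}\rangle$ with edges $E\subseteq V\times V$, start/end $s,t$, weights $w:E\to\mathbb{N}$, traceability $\mathit{tr}:V\to\mathit{BB}$. $f:E\to\mathcal{X}$ assigns distinct variables to edges. $\mathcal{S}_{\mathrm{IPET}}$ contains $\sum_{e=\langle s,n\rangle}f(e)=1$, $\sum_{e=\langle n,t\rangle}f(e)=1$, flow conservation at every $n\ne s,t$, $-f(e)\le0$, and possibly further low-level flow facts. $g_{\mathrm{IPET}}(k)=\sum_{e\in E}w(e)k(f(e))$. Standing assumption (IPET safety): for every execution of $q$ along CFG path $\pi$, the valuation $k_\pi(f(e))=\pi\#e$ satisfies $\mathcal{S}_{\mathrm{IPET}}$ and the execution time is at most $g_{\mathrm{IPET}}(k_\pi)$. Basic block predicates. For $bb\in\mathit{BB}$, $\psi_{bb}$ is the conjunction of the atomic predicates of all for/if statements enclosing $bb$ (extend atoms without their existential quantifier; check literals as-is); $\psi_{bb}=\mathrm{true}$ if none. If $bb$ is the header of loop $\ell$, also $\psi'_{bb}=\psi_{bb}\wedge(\text{atom of }\ell)$. $\Psi$ is the set of all these predicates. By the structure of the generated code, in the run of $q$ on a concrete $M$, executions of a non-header $bb$ correspond one-to-one to matches of $\psi_{bb}$, and executions of a loop header $bb$ to matches of $\psi_{bb}$ plus matches of $\psi'_{bb}$. For concrete $M$, $\mathcal{S}_{\mathrm{flow}}(M)$ contains for each $bb$: $\sum_{e=\langle n_1,n_2\rangle\in E,\mathit{tr}(n_1)=bb}f(e)=M\#\psi_{bb}+M\#\psi'_{bb}$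 (loop header) or $=M\#\psi_{bb}$ (otherwise). Witness generation. Given $P=\langle O_P,I_P,\mathcal{S}_P\rangle$ and $\mathcal{T}=\langle\Phi,r\rangle$ (with the range of $f$ disjoint from the range of $r$ and from the variables of $\mathcal{S}_P$), extend $r$ to $r'$ on $\Phi\cup\Psi$ by assigning to each $\psi\in\Psi$ a fresh distinct variable (not in the range of $f$, of $r$, or in $\mathcal{S}_P$). $\mathcal{S}_{\mathrm{merge}}$ contains for each $bb$: $r'(\psi_{bb})+r'(\psi'_{bb})-\sum_{e=\langle n_1,n_2\rangle\in E,\mathit{tr}(n_1)=bb}f(e)=0$ if $bb$ is a loop header, else $r'(\psi_{bb})-\sum_{e=\langle n_1,n_2\rangle\in E,\mathit{tr}(n_1)=bb}f(e)=0$. Set $P'=\langle O_P,I_P,\mathcal{S}_P\cup\mathcal{S}_{\mathrm{IPET}}\cup\mathcal{S}_{\mathrm{merge}}\rangle$ and $\mathcal{T}'=\langle\Phi\cup\Psi,r'\rangle$. *)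

theory Defs
  imports Main "HOL-Library.FuncSet"
begin

section \<open>Linear systems over a reserve of integer variables 'x\<close>

(* An inequality  sum_j a_j x_j <= b  is a pair (a, b) with a finitely supported
   coefficient function a :: 'x => int. *)
type_synonym 'x lineq = "('x \<Rightarrow> int) \<times> int"
type_synonym 'x lsys = "'x lineq set"

definition lhs :: "('x \<Rightarrow> int) \<Rightarrow> ('x \<Rightarrow> int) \<Rightarrow> int" where
  "lhs a k = (\<Sum>x\<in>{x. a x \<noteq> 0}. a x * k x)"

definition solves :: "('x \<Rightarrow> int) \<Rightarrow> 'x lsys \<Rightarrow> bool" where
  "solves k S = (\<forall>(a, b)\<in>S. lhs a k \<le> b)"

definition entails :: "'x lsys \<Rightarrow> 'x lsys \<Rightarrow> bool" where
  "entails S1 S2 = (\<forall>k. solves k S1 \<longrightarrow> solves k S2)"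

definition wf_sys :: "'x lsys \<Rightarrow> bool" where
  "wf_sys S = (finite S \<and> (\<forall>(a, b)\<in>S. finite {x. a x \<noteq> 0}))"

definition vars_sys :: "'x lsys \<Rightarrow> 'x set" where
  "vars_sys S = (\<Union>(a, b)\<in>S. {x. a x \<noteq> 0})"

definition eqn :: "('x \<Rightarrow> int) \<Rightarrow> int \<Rightarrow> 'x lsys" where
  "eqn a c = {(a, c), (\<lambda>x. - a x, - c)}"

(* coefficient vector of  sum_{x in A} x *)
definition ind :: "'x set \<Rightarrow> 'x \<Rightarrow> int" where
  "ind A = (\<lambda>x. if x \<in> A then 1 else 0)"

section \<open>Partial models\<close>

datatype tv = Zero | One | Half   (* Half = unknown *)

record ('c, 'r, 'o, 'x) pmodel =
  objs  :: "'o set"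
  cls   :: "'c \<Rightarrow> 'o \<Rightarrow> tv"
  rel   :: "'r \<Rightarrow> 'o \<Rightarrow> 'o \<Rightarrow> tv"
  exs   :: "'o \<Rightarrow> tv"
  sim   :: "'o \<Rightarrow> 'o \<Rightarrow> tv"
  scope :: "'x lsys"

definition wf_pmodel :: "('c, 'r, 'o, 'x) pmodel \<Rightarrow> bool" where
  "wf_pmodel P = (finite (objs P) \<and> wf_sys (scope P))"

definition concrete :: "('c, 'r, 'o, 'x) pmodel \<Rightarrow> bool" where
  "concrete M = (wf_pmodel M
     \<and> (\<forall>c. \<forall>b\<in>objs M. cls M c b \<noteq> Half)
     \<and> (\<forall>r. \<forall>o1\<in>objs M. \<forall>o2\<in>objs M. rel M r o1 o2 \<noteq> Half)
     \<and> (\<forall>b\<in>objs M. exs M b = One)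
     \<and> (\<forall>o1\<in>objs M. \<forall>o2\<in>objs M. sim M o1 o2 = (if o1 = o2 then One else Zero))
     \<and> (\<exists>k. solves k (scope M)))"

definition refines_via :: "('c, 'r, 'o, 'x) pmodel \<Rightarrow> ('q \<Rightarrow> 'o) \<Rightarrow> ('c, 'r, 'q, 'x) pmodel \<Rightarrow> bool" where
  "refines_via P ab Q = (ab ` objs Q \<subseteq> objs P
     \<and> (\<forall>c. \<forall>q\<in>objs Q. cls P c (ab q) = Half \<or> cls P c (ab q) = cls Q c q)
     \<and> (\<forall>r. \<forall>q1\<in>objs Q. \<forall>q2\<in>objs Q.
           rel P r (ab q1) (ab q2) = Half \<or> rel P r (ab q1) (ab q2) = rel Q r q1 q2)
     \<and> (\<forall>q\<in>objs Q. exs P (ab q) = Half \<or> exs P (ab q) = exs Q q)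
     \<and> (\<forall>q1\<in>objs Q. \<forall>q2\<in>objs Q.
           sim P (ab q1) (ab q2) = Half \<or> sim P (ab q1) (ab q2) = sim Q q1 q2)
     \<and> (\<forall>p\<in>objs P. exs P p = One \<longrightarrow> (\<exists>q\<in>objs Q. ab q = p))
     \<and> entails (scope Q) (scope P))"

definition refines :: "('c, 'r, 'o, 'x) pmodel \<Rightarrow> ('c, 'r, 'q, 'x) pmodel \<Rightarrow> bool" where
  "refines P Q = (\<exists>ab. refines_via P ab Q)"

section \<open>First-order predicates over the metamodel and match counting\<close>

datatype ('c, 'r, 'v) fo =
    FTrue
  | FCls 'c 'v
  | FRel 'r 'v 'v
  | FExs 'v
  | FSim 'v 'v
  | FEq 'v 'v
  | FNot "('c, 'r, 'v) fo"
  | FAnd "('c, 'r, 'v) fo" "('c, 'r, 'v) fo"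
  | FEx 'v "('c, 'r, 'v) fo"

fun fvars :: "('c, 'r, 'v) fo \<Rightarrow> 'v set" where
  "fvars FTrue = {}"
| "fvars (FCls c v) = {v}"
| "fvars (FRel r v w) = {v, w}"
| "fvars (FExs v) = {v}"
| "fvars (FSim v w) = {v, w}"
| "fvars (FEq v w) = {v, w}"
| "fvars (FNot \<phi>) = fvars \<phi>"
| "fvars (FAnd \<phi> \<psi>) = fvars \<phi> \<union> fvars \<psi>"
| "fvars (FEx v \<phi>) = fvars \<phi> - {v}"

fun holds :: "('c, 'r, 'o, 'x) pmodel \<Rightarrow> ('v \<Rightarrow> 'o) \<Rightarrow> ('c, 'r, 'v) fo \<Rightarrow> bool" where
  "holds M Z FTrue = True"
| "holds M Z (FCls c v) = (cls M c (Z v) = One)"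
| "holds M Z (FRel r v w) = (rel M r (Z v) (Z w) = One)"
| "holds M Z (FExs v) = (exs M (Z v) = One)"
| "holds M Z (FSim v w) = (sim M (Z v) (Z w) = One)"
| "holds M Z (FEq v w) = (Z v = Z w)"
| "holds M Z (FNot \<phi>) = (\<not> holds M Z \<phi>)"
| "holds M Z (FAnd \<phi> \<psi>) = (holds M Z \<phi> \<and> holds M Z \<psi>)"
| "holds M Z (FEx v \<phi>) = (\<exists>b\<in>objs M. holds M (Z(v := b)) \<phi>)"

definition match_count :: "('c, 'r, 'o, 'x) pmodel \<Rightarrow> ('c, 'r, 'v) fo \<Rightarrow> nat" where
  "match_count M \<phi> = card {Z \<in> fvars \<phi> \<rightarrow>\<^sub>E objs M. holds M Z \<phi>}"

section \<open>Theories, solutions, renaming\<close>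

type_synonym ('c, 'r, 'v, 'x) fotheory = "('c, 'r, 'v) fo set \<times> (('c, 'r, 'v) fo \<Rightarrow> 'x)"

definition compatible :: "('c, 'r, 'o, 'x) pmodel \<Rightarrow> ('c, 'r, 'v, 'x) fotheory \<Rightarrow> bool" where
  "compatible M T = (\<forall>\<phi>\<in>fst T. entails (scope M) (eqn (ind {snd T \<phi>}) (int (match_count M \<phi>))))"

definition solutions :: "('c, 'r, 'o, 'x) pmodel \<Rightarrow> ('c, 'r, 'v, 'x) fotheory \<Rightarrow> ('c, 'r, 'm, 'x) pmodel set" where
  "solutions P T = {M. concrete M \<and> refines P M \<and> compatible M T}"

definition stationary :: "('x \<Rightarrow> 'x) \<Rightarrow> ('c, 'r, 'v, 'x) fotheory \<Rightarrow> bool" where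
  "stationary rename T = (\<forall>\<phi>\<in>fst T. rename (snd T \<phi>) = snd T \<phi>)"

definition rename_sys :: "('x \<Rightarrow> 'x) \<Rightarrow> 'x lsys \<Rightarrow> 'x lsys" where
  "rename_sys rename S = (\<lambda>(a, b). (a \<circ> inv rename, b)) ` S"

definition rename_pm :: "('x \<Rightarrow> 'x) \<Rightarrow> ('c, 'r, 'o, 'x) pmodel \<Rightarrow> ('c, 'r, 'o, 'x) pmodel" where
  "rename_pm rename P = P\<lparr>scope := rename_sys rename (scope P)\<rparr>"

section \<open>Query programs, their CFG and IPET\<close>

(* atoms of extend / check constraints; a literal is (polarity, atom) *)
datatype ('c, 'r, 'v) qatom = QCls 'c 'v | QRel 'r 'v 'v | QEq 'v 'v

type_synonym ('c, 'r, 'v) lit = "bool \<times> ('c, 'r, 'v) qatom"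

fun atom_fo :: "('c, 'r, 'v) qatom \<Rightarrow> ('c, 'r, 'v) fo" where
  "atom_fo (QCls c v) = FCls c v"
| "atom_fo (QRel r v w) = FRel r v w"
| "atom_fo (QEq v w) = FEq v w"

definition lit_fo :: "('c, 'r, 'v) lit \<Rightarrow> ('c, 'r, 'v) fo" where
  "lit_fo l = (if fst l then atom_fo (snd l) else FNot (atom_fo (snd l)))"

fun conj :: "('c, 'r, 'v) fo list \<Rightarrow> ('c, 'r, 'v) fo" where
  "conj [] = FTrue"
| "conj [\<phi>] = \<phi>"
| "conj (\<phi> # \<phi>s) = FAnd \<phi> (conj \<phi>s)"

record ('bb, 'n, 'c, 'r, 'v, 'x, 'm) qprog =
  bbs   :: "'bb set"
  encl  :: "'bb \<Rightarrow> ('c, 'r, 'v) lit list"         (* atoms of the for/if statements enclosing bb *)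
  hdr   :: "'bb \<Rightarrow> ('c, 'r, 'v) lit option"       (* Some a iff bb is the header of a loop with atom a *)
  cfgV  :: "'n set"
  cfgE  :: "('n \<times> 'n) set"
  cfgs  :: "'n"
  cfgt  :: "'n"
  cfgw  :: "('n \<times> 'n) \<Rightarrow> nat"
  cfgtr :: "'n \<Rightarrow> 'bb"
  evar  :: "('n \<times> 'n) \<Rightarrow> 'x"
  Sipet :: "'x lsys"
  run   :: "('c, 'r, 'm, 'x) pmodel \<Rightarrow> ('n \<times> 'n) list"   (* CFG path of the execution on a model *)
  extime :: "('c, 'r, 'm, 'x) pmodel \<Rightarrow> nat"

definition psi :: "('bb, 'n, 'c, 'r, 'v, 'x, 'm) qprog \<Rightarrow> 'bb \<Rightarrow> ('c, 'r, 'v) fo" where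
  "psi q bb = conj (map lit_fo (encl q bb))"

definition psi' :: "('bb, 'n, 'c, 'r, 'v, 'x, 'm) qprog \<Rightarrow> 'bb \<Rightarrow> ('c, 'r, 'v) lit \<Rightarrow> ('c, 'r, 'v) fo" where
  "psi' q bb a = FAnd (psi q bb) (lit_fo a)"

definition Psi :: "('bb, 'n, 'c, 'r, 'v, 'x, 'm) qprog \<Rightarrow> ('c, 'r, 'v) fo set" where
  "Psi q = psi q ` bbs q \<union> {psi' q bb a | bb a. bb \<in> bbs q \<and> hdr q bb = Some a}"

definition out_edges :: "('bb, 'n, 'c, 'r, 'v, 'x, 'm) qprog \<Rightarrow> 'bb \<Rightarrow> ('n \<times> 'n) set" where
  "out_edges q bb = {e \<in> cfgE q. cfgtr q (fst e) = bb}"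

definition g_ipet :: "('bb, 'n, 'c, 'r, 'v, 'x, 'm) qprog \<Rightarrow> ('x \<Rightarrow> int) \<Rightarrow> int" where
  "g_ipet q k = (\<Sum>e\<in>cfgE q. int (cfgw q e) * k (evar q e))"

definition is_cfg_path :: "('bb, 'n, 'c, 'r, 'v, 'x, 'm) qprog \<Rightarrow> ('n \<times> 'n) list \<Rightarrow> bool" where
  "is_cfg_path q \<pi> = (\<pi> \<noteq> [] \<and> set \<pi> \<subseteq> cfgE q \<and> fst (hd \<pi>) = cfgs q \<and> snd (last \<pi>) = cfgt q
     \<and> (\<forall>i. Suc i < length \<pi> \<longrightarrow> snd (\<pi> ! i) = fst (\<pi> ! Suc i)))"

definition exec_count :: "('bb, 'n, 'c, 'r, 'v, 'x, 'm) qprog \<Rightarrow> ('n \<times> 'n) list \<Rightarrow> 'bb \<Rightarrow> nat" where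
  "exec_count q \<pi> bb = length (filter (\<lambda>e. cfgtr q (fst e) = bb) \<pi>)"

definition block_matches :: "('bb, 'n, 'c, 'r, 'v, 'x, 'm) qprog \<Rightarrow> ('c, 'r, 'm, 'x) pmodel \<Rightarrow> 'bb \<Rightarrow> int" where
  "block_matches q N bb = int (match_count N (psi q bb))
     + (case hdr q bb of None \<Rightarrow> 0 | Some a \<Rightarrow> int (match_count N (psi' q bb a)))"

definition ipet_std :: "('bb, 'n, 'c, 'r, 'v, 'x, 'm) qprog \<Rightarrow> bool" where
  "ipet_std q = (
       eqn (ind (evar q ` {e \<in> cfgE q. fst e = cfgs q})) 1 \<subseteq> Sipet q
     \<and> eqn (ind (evar q ` {e \<in> cfgE q. snd e = cfgt q})) 1 \<subseteq> Sipet q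
     \<and> (\<forall>n\<in>cfgV q - {cfgs q, cfgt q}.
          eqn (\<lambda>x. ind (evar q ` {e \<in> cfgE q. snd e = n}) x - ind (evar q ` {e \<in> cfgE q. fst e = n}) x) 0
            \<subseteq> Sipet q)
     \<and> (\<forall>e\<in>cfgE q. ((\<lambda>x. if x = evar q e then -1 else 0), 0) \<in> Sipet q))"

(* well-formedness of the query program / CFG, IPET safety, and the block-match
   correspondence guaranteed by the structure of the generated code *)
definition query_program :: "('bb, 'n, 'c, 'r, 'v, 'x, 'm) qprog \<Rightarrow> bool" where
  "query_program q = (finite (bbs q) \<and> finite (cfgV q) \<and> cfgE q \<subseteq> cfgV q \<times> cfgV q
     \<and> cfgs q \<in> cfgV q \<and> cfgt q \<in> cfgV q \<and> cfgtr q ` cfgV q \<subseteq> bbs q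
     \<and> inj_on (evar q) (cfgE q)
     \<and> wf_sys (Sipet q) \<and> vars_sys (Sipet q) \<subseteq> evar q ` cfgE q \<and> ipet_std q
     \<and> (\<forall>M. concrete M \<longrightarrow>
          is_cfg_path q (run q M)
          \<and> (\<forall>k. (\<forall>e\<in>cfgE q. k (evar q e) = int (count_list (run q M) e)) \<longrightarrow>
                 solves k (Sipet q) \<and> int (extime q M) \<le> g_ipet q k)
          \<and> (\<forall>bb\<in>bbs q. int (exec_count q (run q M) bb) = block_matches q M bb)))"

definition S_flow :: "('bb, 'n, 'c, 'r, 'v, 'x, 'm) qprog \<Rightarrow> ('c, 'r, 'm, 'x) pmodel \<Rightarrow> 'x lsys" where
  "S_flow q N = (\<Union>bb\<in>bbs q. eqn (ind (evar q ` out_edges q bb)) (block_matches q N bb))"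

definition DS :: "('bb, 'n, 'c, 'r, 'v, 'x, 'm) qprog \<Rightarrow> ('c, 'r, 'm, 'x) pmodel \<Rightarrow> int" where
  "DS q N = Max {g_ipet q k | k. solves k (Sipet q \<union> S_flow q N)}"

definition g_witness :: "('bb, 'n, 'c, 'r, 'v, 'x, 'm) qprog \<Rightarrow> ('c, 'r, 'm, 'x) pmodel \<Rightarrow> int" where
  "g_witness q N = Max {g_ipet q k | k. solves k (scope N)}"

section \<open>Witness generation\<close>

definition fresh_ext :: "('bb, 'n, 'c, 'r, 'v, 'x, 'm) qprog \<Rightarrow> ('c, 'r, 'o, 'x) pmodel
     \<Rightarrow> ('c, 'r, 'v, 'x) fotheory \<Rightarrow> (('c, 'r, 'v) fo \<Rightarrow> 'x) \<Rightarrow> bool" where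
  "fresh_ext q P T r' = ((\<forall>\<phi>\<in>fst T. r' \<phi> = snd T \<phi>)
     \<and> inj_on r' (Psi q - fst T)
     \<and> (\<forall>\<psi>\<in>Psi q - fst T. r' \<psi> \<notin> evar q ` cfgE q \<and> r' \<psi> \<notin> snd T ` fst T
                              \<and> r' \<psi> \<notin> vars_sys (scope P)))"

definition S_merge :: "('bb, 'n, 'c, 'r, 'v, 'x, 'm) qprog \<Rightarrow> (('c, 'r, 'v) fo \<Rightarrow> 'x) \<Rightarrow> 'x lsys" where
  "S_merge q r' = (\<Union>bb\<in>bbs q.
     eqn (\<lambda>x. ind {r' (psi q bb)} x
              + (case hdr q bb of None \<Rightarrow> 0 | Some a \<Rightarrow> ind {r' (psi' q bb a)} x)
              - ind (evar q ` out_edges q bb) x) 0)"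

definition witness_model :: "('bb, 'n, 'c, 'r, 'v, 'x, 'm) qprog \<Rightarrow> (('c, 'r, 'v) fo \<Rightarrow> 'x)
     \<Rightarrow> ('c, 'r, 'o, 'x) pmodel \<Rightarrow> ('c, 'r, 'o, 'x) pmodel" where
  "witness_model q r' P = P\<lparr>scope := scope P \<union> Sipet q \<union> S_merge q r'\<rparr>"

definition witness_theory :: "('bb, 'n, 'c, 'r, 'v, 'x, 'm) qprog \<Rightarrow> ('c, 'r, 'v, 'x) fotheory
     \<Rightarrow> (('c, 'r, 'v) fo \<Rightarrow> 'x) \<Rightarrow> ('c, 'r, 'v, 'x) fotheory" where
  "witness_theory q T r' = (fst T \<union> Psi q, r')"

end

theory Submission
  imports Defs
begin

(* Extend the scope of M by the IPET constraints, by the flow equations S_flow(M) fixing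
   the block counts to the match counts of M, by the merge equations, and by the equations
   r'(phi) = M # phi.  Beforehand the variables of M's scope that clash with edge variables
   or with the fresh predicate variables are swapped with unused ones; the reserve is
   infinite, and no variable of P or T is touched.  Every solution k of
   S_IPET \<union> S_flow(M) then extends to a solution of the new scope without changing
   the edge variables: predicate variables are read off M and all others from a fixed
   solution of M's scope.  As g_IPET only sees edge variables, both maxima range over the
   same values.  The new scope is solvable because the edge counts of the run of q on M
   solve S_IPET \<union> S_flow(M). *)

lemma lhs_eq_sum_superset:
  "finite F \<Longrightarrow> {x. a x \<noteq> 0} \<subseteq> F \<Longrightarrow> lhs a k = (\<Sum>x\<in>F. a x * k x)"
  unfolding lhs_def by (rule sum.mono_neutral_left) auto

lemma lhs_cong: "(\<And>x. a x \<noteq> 0 \<Longrightarrow> k x = k' x) \<Longrightarrow> lhs a k = lhs a k'"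
  unfolding lhs_def by (rule sum.cong) auto

lemma lhs_zero [simp]: "lhs (\<lambda>x. 0) k = 0"
  by (simp add: lhs_def)

lemma lhs_uminus: "lhs (\<lambda>x. - a x) k = - lhs a k"
  unfolding lhs_def by (simp add: sum_negf)

lemma finite_support_add:
  "finite {x. a x \<noteq> 0} \<Longrightarrow> finite {x. b x \<noteq> 0} \<Longrightarrow> finite {x. a x + b x \<noteq> (0::int)}"
  by (rule finite_subset[of _ "{x. a x \<noteq> 0} \<union> {x. b x \<noteq> 0}"]) auto

lemma finite_support_diff:
  "finite {x. a x \<noteq> 0} \<Longrightarrow> finite {x. b x \<noteq> 0} \<Longrightarrow> finite {x. a x - b x \<noteq> (0::int)}"
  by (rule finite_subset[of _ "{x. a x \<noteq> 0} \<union> {x. b x \<noteq> 0}"]) auto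

lemma finite_support_ind: "finite A \<Longrightarrow> finite {x. ind A x \<noteq> 0}"
  by (auto simp: ind_def)

lemma lhs_add:
  assumes "finite {x. a x \<noteq> 0}" "finite {x. b x \<noteq> 0}"
  shows "lhs (\<lambda>x. a x + b x) k = lhs a k + lhs b k"
proof -
  let ?F = "{x. a x \<noteq> 0} \<union> {x. b x \<noteq> 0}"
  have F: "finite ?F" using assms by simp
  have "lhs (\<lambda>x. a x + b x) k = (\<Sum>x\<in>?F. a x * k x) + (\<Sum>x\<in>?F. b x * k x)"
    by (subst lhs_eq_sum_superset[OF F]) (auto simp: distrib_right sum.distrib)
  also have "\<dots> = lhs a k + lhs b k"
    by (simp add: lhs_eq_sum_superset[OF F])
  finally show ?thesis .
qed

lemma lhs_diff:
  assumes "finite {x. a x \<noteq> 0}" "finite {x. b x \<noteq> 0}"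
  shows "lhs (\<lambda>x. a x - b x) k = lhs a k - lhs b k"
  using lhs_add[of a "\<lambda>x. - b x" k] assms by (simp add: lhs_uminus)

lemma lhs_ind: "finite A \<Longrightarrow> lhs (ind A) k = sum k A"
  by (subst lhs_eq_sum_superset[of A]) (auto simp: ind_def)

lemma support_comp_inv:
  "bij \<rho> \<Longrightarrow> {x. a (inv \<rho> x) \<noteq> 0} = \<rho> ` {y. a y \<noteq> 0}"
  by (auto simp: bij_def inv_f_f image_iff) (metis surj_f_inv_f)

lemma lhs_comp_inv: "bij \<rho> \<Longrightarrow> lhs (a \<circ> inv \<rho>) k = lhs a (k \<circ> \<rho>)"
  unfolding lhs_def
  by (simp add: support_comp_inv, subst sum.reindex) (auto simp: bij_def inv_f_f inj_on_def)

lemma solves_eqn_iff: "solves k (eqn a c) \<longleftrightarrow> lhs a k = c"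
  unfolding solves_def eqn_def by (auto simp: lhs_uminus)

lemma solves_Un: "solves k (A \<union> B) \<longleftrightarrow> solves k A \<and> solves k B"
  unfolding solves_def by blast

lemma solves_UN: "solves k (\<Union>i\<in>I. A i) \<longleftrightarrow> (\<forall>i\<in>I. solves k (A i))"
  unfolding solves_def by blast

lemma solves_subset: "S \<subseteq> S' \<Longrightarrow> solves k S' \<Longrightarrow> solves k S"
  unfolding solves_def by blast

lemma entails_subset: "S \<subseteq> S' \<Longrightarrow> entails S' S"
  unfolding entails_def using solves_subset by blast

lemma solves_cong: "(\<And>x. x \<in> vars_sys S \<Longrightarrow> k x = k' x) \<Longrightarrow> solves k S = solves k' S"
  unfolding solves_def vars_sys_def
  by (intro ball_cong refl) (auto intro!: arg_cong2[where f = "(\<le>)"] lhs_cong)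

lemma solves_rename_sys: "bij \<rho> \<Longrightarrow> solves k (rename_sys \<rho> S) \<longleftrightarrow> solves (k \<circ> \<rho>) S"
  unfolding solves_def rename_sys_def by (simp add: lhs_comp_inv split_beta)

lemma wf_sys_Un: "wf_sys A \<Longrightarrow> wf_sys B \<Longrightarrow> wf_sys (A \<union> B)"
  unfolding wf_sys_def by auto

lemma wf_sys_UN: "finite I \<Longrightarrow> (\<And>i. i \<in> I \<Longrightarrow> wf_sys (A i)) \<Longrightarrow> wf_sys (\<Union>i\<in>I. A i)"
  unfolding wf_sys_def by auto

lemma wf_sys_eqn: "finite {x. a x \<noteq> 0} \<Longrightarrow> wf_sys (eqn a c)"
  unfolding wf_sys_def eqn_def by auto

lemma wf_sys_rename_sys: "bij \<rho> \<Longrightarrow> wf_sys S \<Longrightarrow> wf_sys (rename_sys \<rho> S)"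
  unfolding wf_sys_def rename_sys_def by (auto simp: support_comp_inv)

lemma finite_vars_sys: "wf_sys S \<Longrightarrow> finite (vars_sys S)"
  unfolding wf_sys_def vars_sys_def by auto

lemma obtain_involution_moving_out:
  assumes "infinite (UNIV :: 'x set)" "finite B" "finite F"
  obtains \<rho> :: "'x \<Rightarrow> 'x"
  where "\<rho> \<circ> \<rho> = id" "\<And>x. x \<in> B \<Longrightarrow> \<rho> x \<notin> F" "\<And>x. x \<notin> B \<Longrightarrow> x \<in> F \<Longrightarrow> \<rho> x = x"
proof -
  have "infinite (- (F \<union> B))"
    using assms by (simp add: Compl_eq_Diff_UNIV Diff_infinite_finite)
  then obtain C where "finite C" "card C = card B" and C: "C \<subseteq> - (F \<union> B)"
    using infinite_arbitrarily_large by blast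
  then obtain h where h: "bij_betw h B C"
    using finite_same_card_bij[OF \<open>finite B\<close>] by metis
  define \<rho> where "\<rho> x = (if x \<in> B then h x else if x \<in> C then inv_into B h x else x)" for x
  have "\<rho> (\<rho> x) = x" for x
  proof -
    consider "x \<in> B" | "x \<in> C" | "x \<notin> B" "x \<notin> C" by blast
    then show ?thesis
    proof cases
      case 1
      then show ?thesis
        using C h bij_betwE[OF h] by (auto simp: \<rho>_def bij_betw_inv_into_left)
    next
      case 2
      then have "x \<notin> B" "inv_into B h x \<in> B"
        using C bij_betwE[OF bij_betw_inv_into[OF h]] by auto
      then show ?thesis
        using 2 h by (simp add: \<rho>_def bij_betw_inv_into_right)
    qed (simp add: \<rho>_def)
  qed
  then have "\<rho> \<circ> \<rho> = id"
    by (simp add: fun_eq_iff)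
  moreover have "\<rho> x \<notin> F" if "x \<in> B" for x
    using that C bij_betwE[OF h] by (auto simp: \<rho>_def)
  moreover have "\<rho> x = x" if "x \<notin> B" "x \<in> F" for x
    using that C by (auto simp: \<rho>_def)
  ultimately show ?thesis
    by (rule that)
qed

lemma holds_scope_update [simp]: "holds (M\<lparr>scope := S\<rparr>) Z \<phi> = holds M Z \<phi>"
  by (induction \<phi> arbitrary: Z) auto

lemma match_count_scope_update [simp]: "match_count (M\<lparr>scope := S\<rparr>) \<phi> = match_count M \<phi>"
  by (simp add: match_count_def)

lemma block_matches_scope_update [simp]: "block_matches q (M\<lparr>scope := S\<rparr>) = block_matches q M"
  by (simp add: fun_eq_iff block_matches_def split: option.split)

lemma S_flow_scope_update [simp]: "S_flow q (M\<lparr>scope := S\<rparr>) = S_flow q M"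
  by (simp add: S_flow_def)

lemma refines_via_id: "refines_via Q id Q"
  by (auto simp: refines_via_def entails_def)

lemma refines_via_scope_update:
  "refines_via P ab Q \<Longrightarrow> entails S' S \<Longrightarrow> refines_via (P\<lparr>scope := S\<rparr>) ab (Q\<lparr>scope := S'\<rparr>)"
  by (simp add: refines_via_def)

lemma compatible_if_eqns_in_scope:
  "(\<And>\<phi>. \<phi> \<in> fst T \<Longrightarrow> eqn (ind {snd T \<phi>}) (int (match_count M \<phi>)) \<subseteq> scope M)
   \<Longrightarrow> compatible M T"
  unfolding compatible_def by (simp add: entails_subset)

lemma compatible_value:
  "compatible M T \<Longrightarrow> solves k (scope M) \<Longrightarrow> \<phi> \<in> fst T \<Longrightarrow> k (snd T \<phi>) = int (match_count M \<phi>)"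
  unfolding compatible_def entails_def by (auto simp: solves_eqn_iff lhs_ind)

lemma query_program_finite_cfgE: "query_program q \<Longrightarrow> finite (cfgE q)"
  unfolding query_program_def by (meson finite_SigmaI finite_subset)

lemma finite_Psi: "finite (bbs q) \<Longrightarrow> finite (Psi q)"
proof -
  assume "finite (bbs q)"
  moreover have "{psi' q bb a | bb a. bb \<in> bbs q \<and> hdr q bb = Some a}
      \<subseteq> (\<lambda>bb. psi' q bb (the (hdr q bb))) ` bbs q" by force
  ultimately show ?thesis
    unfolding Psi_def by (meson finite_Un finite_imageI finite_subset)
qed

lemma g_ipet_cong:
  "(\<And>e. e \<in> cfgE q \<Longrightarrow> k (evar q e) = k' (evar q e)) \<Longrightarrow> g_ipet q k = g_ipet q k'"
  unfolding g_ipet_def by simp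

lemma vars_sys_S_flow: "vars_sys (S_flow q N) \<subseteq> evar q ` cfgE q"
  by (auto simp: vars_sys_def S_flow_def eqn_def ind_def out_edges_def split: if_splits)

lemma wf_sys_S_flow: "finite (bbs q) \<Longrightarrow> finite (cfgE q) \<Longrightarrow> wf_sys (S_flow q N)"
  unfolding S_flow_def out_edges_def by (intro wf_sys_UN wf_sys_eqn finite_support_ind) auto

lemma sum_count_list_eq_length_filter:
  "set xs \<subseteq> E \<Longrightarrow> finite E \<Longrightarrow> (\<Sum>e\<in>{e\<in>E. P e}. count_list xs e) = length (filter P xs)"
proof (induction xs)
  case (Cons x xs)
  have "(\<Sum>e\<in>{e\<in>E. P e}. count_list (x # xs) e)
      = (\<Sum>e\<in>{e\<in>E. P e}. count_list xs e) + (\<Sum>e\<in>{e\<in>E. P e}. if x = e then 1 else 0)"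
    by (simp only: sum.distrib[symmetric]) (rule sum.cong, auto)
  also have "(\<Sum>e\<in>{e\<in>E. P e}. if x = e then 1 else 0) = (if P x then 1 else (0::nat))"
    using Cons.prems by (simp add: sum.delta)
  finally show ?case using Cons by simp
qed simp

lemma run_counts_solve_flow:
  assumes q: "query_program q" and M: "concrete M"
  shows "\<exists>k. solves k (Sipet q \<union> S_flow q M)"
proof -
  have finE: "finite (cfgE q)" using q by (rule query_program_finite_cfgE)
  have inj: "inj_on (evar q) (cfgE q)"
    and path: "is_cfg_path q (run q M)"
    and safe: "\<And>k. (\<forall>e\<in>cfgE q. k (evar q e) = int (count_list (run q M) e)) \<Longrightarrow> solves k (Sipet q)"
    and blocks: "\<And>bb. bb \<in> bbs q \<Longrightarrow> int (exec_count q (run q M) bb) = block_matches q M bb"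
    using q M unfolding query_program_def by blast+
  define k where "k x = int (count_list (run q M) (inv_into (cfgE q) (evar q) x))" for x
  have k_edge: "k (evar q e) = int (count_list (run q M) e)" if "e \<in> cfgE q" for e
    using that inj by (simp add: k_def)
  have "solves k (eqn (ind (evar q ` out_edges q bb)) (block_matches q M bb))"
    if bb: "bb \<in> bbs q" for bb
  proof -
    have out: "out_edges q bb \<subseteq> cfgE q" "finite (out_edges q bb)"
      using finE by (auto simp: out_edges_def)
    have "sum k (evar q ` out_edges q bb) = (\<Sum>e\<in>out_edges q bb. k (evar q e))"
      using out inj by (simp add: sum.reindex inj_on_subset)
    also have "\<dots> = (\<Sum>e\<in>out_edges q bb. int (count_list (run q M) e))"
      using out by (intro sum.cong refl k_edge) auto
    also have "\<dots> = int (exec_count q (run q M) bb)"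
      using path finE unfolding out_edges_def exec_count_def is_cfg_path_def
      by (simp add: sum_count_list_eq_length_filter flip: of_nat_sum)
    finally show ?thesis
      using out blocks[OF bb] by (simp add: solves_eqn_iff lhs_ind)
  qed
  then have "solves k (S_flow q M)"
    unfolding S_flow_def solves_UN by blast
  moreover have "solves k (Sipet q)"
    using safe k_edge by blast
  ultimately show ?thesis
    by (auto simp: solves_Un)
qed

lemma lhs_merge_row:
  assumes "finite E" "finite {x. c x \<noteq> 0}"
  shows "lhs (\<lambda>x. ind {a} x + c x - ind E x) k = k a + lhs c k - sum k E"
  using assms by (simp add: lhs_diff lhs_add finite_support_add finite_support_ind lhs_ind)

lemma finite_support_merge_row:
  "finite E \<Longrightarrow> finite {x. c x \<noteq> 0} \<Longrightarrow> finite {x. ind {a} x + c x - ind E x \<noteq> 0}"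
  by (rule finite_support_diff[OF finite_support_add]) (simp_all add: finite_support_ind)

lemma wf_sys_S_merge:
  assumes "finite (bbs q)" "finite (cfgE q)"
  shows "wf_sys (S_merge q r')"
  unfolding S_merge_def
proof (intro wf_sys_UN wf_sys_eqn finite_support_merge_row)
  fix bb
  show "finite (evar q ` out_edges q bb)"
    using assms by (simp add: out_edges_def)
  show "finite {x. (case hdr q bb of None \<Rightarrow> 0 | Some a \<Rightarrow> ind {r' (psi' q bb a)} x) \<noteq> 0}"
    by (cases "hdr q bb") (simp_all add: finite_support_ind)
qed (use assms in simp)

lemma solves_S_merge:
  assumes finE: "finite (cfgE q)" and flow: "solves k (S_flow q N)"
    and pred: "\<And>\<psi>. \<psi> \<in> Psi q \<Longrightarrow> k (r' \<psi>) = int (match_count N \<psi>)"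
  shows "solves k (S_merge q r')"
  unfolding S_merge_def solves_UN
proof
  fix bb assume bb: "bb \<in> bbs q"
  have out: "finite (evar q ` out_edges q bb)"
    using finE by (simp add: out_edges_def)
  have "sum k (evar q ` out_edges q bb) = block_matches q N bb"
    using flow bb out unfolding S_flow_def solves_UN by (auto simp: solves_eqn_iff lhs_ind)
  moreover have "psi q bb \<in> Psi q"
    using bb by (simp add: Psi_def)
  moreover have "psi' q bb a \<in> Psi q" if "hdr q bb = Some a" for a
    using bb that unfolding Psi_def by blast
  ultimately show "solves k (eqn (\<lambda>x. ind {r' (psi q bb)} x
      + (case hdr q bb of None \<Rightarrow> 0 | Some a \<Rightarrow> ind {r' (psi' q bb a)} x)
      - ind (evar q ` out_edges q bb) x) 0)"
    using out pred lhs_merge_row[OF out, of "\<lambda>x. 0"] lhs_merge_row[OF out, of "ind {_}"]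
    by (cases "hdr q bb") (auto simp: solves_eqn_iff block_matches_def finite_support_ind lhs_ind)
qed

locale witness_generation =
  fixes q :: "('bb, 'n, 'c, 'r, 'v, 'x, 'm) qprog"
    and P :: "('c, 'r, 'o, 'x) pmodel"
    and T :: "('c, 'r, 'v, 'x) fotheory"
    and r' :: "('c, 'r, 'v) fo \<Rightarrow> 'x"
    and M :: "('c, 'r, 'm, 'x) pmodel"
  assumes q: "query_program q"
    and P: "wf_pmodel P"
    and T: "finite (fst T)"
    and disj_r: "evar q ` cfgE q \<inter> snd T ` fst T = {}"
    and disj_P: "evar q ` cfgE q \<inter> vars_sys (scope P) = {}"
    and r': "fresh_ext q P T r'"
    and M: "M \<in> solutions P T"
begin

definition edge_vars :: "'x set" where
  "edge_vars = evar q ` cfgE q"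

definition fresh_vars :: "'x set" where
  "fresh_vars = r' ` (Psi q - fst T)"

definition scope_solution :: "'x \<Rightarrow> int" where
  "scope_solution = (SOME k. solves k (scope M))"

lemma finite_cfgE: "finite (cfgE q)"
  using q by (rule query_program_finite_cfgE)

lemma finite_bbs: "finite (bbs q)"
  using q by (simp add: query_program_def)

lemma concrete_M: "concrete M"
  using M by (simp add: solutions_def)

lemma solves_scope_solution: "solves scope_solution (scope M)"
  using concrete_M unfolding scope_solution_def concrete_def by (metis someI)

lemma scope_solution_T:
  "\<phi> \<in> fst T \<Longrightarrow> scope_solution (snd T \<phi>) = int (match_count M \<phi>)"
  using M solves_scope_solution by (auto simp: solutions_def intro: compatible_value)

lemma entails_scope_P: "entails (scope M) (scope P)"
  using M by (auto simp: solutions_def refines_def refines_via_def)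

lemma r'_T: "\<phi> \<in> fst T \<Longrightarrow> r' \<phi> = snd T \<phi>"
  using r' by (simp add: fresh_ext_def)

lemma fresh_vars_notin:
  "x \<in> fresh_vars \<Longrightarrow> x \<notin> edge_vars \<and> x \<notin> snd T ` fst T \<and> x \<notin> vars_sys (scope P)"
  using r' by (auto simp: fresh_ext_def fresh_vars_def edge_vars_def)

lemma obtain_renaming:
  assumes "infinite (UNIV :: 'x set)"
  obtains \<rho> :: "'x \<Rightarrow> 'x"
  where "\<rho> \<circ> \<rho> = id"
    and "\<And>y. y \<in> vars_sys (scope M) \<Longrightarrow> \<rho> y \<notin> edge_vars \<union> fresh_vars"
    and "\<And>x. x \<in> vars_sys (scope P) \<union> snd T ` fst T \<Longrightarrow> \<rho> x = x"
proof -
  define B where "B = vars_sys (scope M) \<inter> (edge_vars \<union> fresh_vars)"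
  define F where "F = vars_sys (scope M) \<union> vars_sys (scope P) \<union> snd T ` fst T
    \<union> edge_vars \<union> fresh_vars"
  have "finite (vars_sys (scope M))" "finite (vars_sys (scope P))"
    using concrete_M P by (auto simp: concrete_def wf_pmodel_def finite_vars_sys)
  moreover have "finite edge_vars" "finite fresh_vars"
    using finite_cfgE finite_Psi[OF finite_bbs] by (simp_all add: edge_vars_def fresh_vars_def)
  ultimately have "finite B" "finite F"
    using T by (simp_all add: B_def F_def)
  then obtain \<rho> where invol: "\<rho> \<circ> \<rho> = id"
    and moved: "\<And>x. x \<in> B \<Longrightarrow> \<rho> x \<notin> F"
    and fixed: "\<And>x. x \<notin> B \<Longrightarrow> x \<in> F \<Longrightarrow> \<rho> x = x"
    using obtain_involution_moving_out[OF assms] by metis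
  show ?thesis
  proof (rule that[OF invol])
    fix y assume y: "y \<in> vars_sys (scope M)"
    show "\<rho> y \<notin> edge_vars \<union> fresh_vars"
    proof (cases "y \<in> B")
      case True
      then show ?thesis using moved[of y] by (simp add: F_def)
    next
      case False
      then show ?thesis using y fixed[of y] by (simp add: B_def F_def)
    qed
  next
    fix x assume x: "x \<in> vars_sys (scope P) \<union> snd T ` fst T"
    then have "x \<notin> edge_vars \<union> fresh_vars"
      using fresh_vars_notin disj_r disj_P by (auto simp: edge_vars_def)
    then show "\<rho> x = x"
      using x fixed[of x] by (simp add: B_def F_def)
  qed
qed

end

locale witness_renaming = witness_generation +
  fixes \<rho>
  assumes involution: "\<rho> \<circ> \<rho> = id"
    and moves_scope_M: "\<And>y. y \<in> vars_sys (scope M) \<Longrightarrow> \<rho> y \<notin> edge_vars \<union> fresh_vars"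
    and fixes_P_T: "\<And>x. x \<in> vars_sys (scope P) \<union> snd T ` fst T \<Longrightarrow> \<rho> x = x"
begin

definition count_eqns where
  "count_eqns = (\<Union>\<phi>\<in>fst T \<union> Psi q. eqn (ind {r' \<phi>}) (int (match_count M \<phi>)))"

definition witness_scope where
  "witness_scope = rename_sys \<rho> (scope M) \<union> scope P \<union> Sipet q \<union> S_merge q r'
     \<union> S_flow q M \<union> count_eqns"

definition witness_solution where
  "witness_solution = M\<lparr>scope := witness_scope\<rparr>"

(* Since rho is an involution, scope_solution \<circ> rho solves the renamed scope of M. *)
definition extend_valuation where
  "extend_valuation k x =
     (if x \<in> edge_vars then k x
      else if x \<in> fresh_vars then int (match_count M (inv_into (Psi q - fst T) r' x))
      else scope_solution (\<rho> x))"

lemma bij_\<rho>: "bij \<rho>"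
  using o_bij[OF involution involution] .

lemma stationary_\<rho>: "stationary \<rho> T"
  using fixes_P_T by (simp add: stationary_def)

lemma extend_valuation_edge: "x \<in> edge_vars \<Longrightarrow> extend_valuation k x = k x"
  by (simp add: extend_valuation_def)

lemma extend_valuation_r':
  assumes "\<phi> \<in> fst T \<union> Psi q"
  shows "extend_valuation k (r' \<phi>) = int (match_count M \<phi>)"
proof (cases "\<phi> \<in> fst T")
  case True
  then have "snd T \<phi> \<notin> edge_vars \<union> fresh_vars"
    using disj_r fresh_vars_notin by (auto simp: edge_vars_def)
  then show ?thesis
    using True by (simp add: extend_valuation_def r'_T fixes_P_T scope_solution_T)
next
  case False
  with assms have "\<phi> \<in> Psi q - fst T" by blast
  moreover from this have "r' \<phi> \<in> fresh_vars"
    by (simp add: fresh_vars_def)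
  ultimately show ?thesis
    using r' fresh_vars_notin by (auto simp: extend_valuation_def fresh_ext_def)
qed

lemma extend_valuation_solves_edge_sys:
  assumes "vars_sys S \<subseteq> edge_vars" "solves k S"
  shows "solves (extend_valuation k) S"
proof -
  have "solves (extend_valuation k) S = solves k S"
    using assms(1) by (intro solves_cong) (auto simp: extend_valuation_edge)
  with assms(2) show ?thesis by simp
qed

lemma extend_valuation_solves_rename_scope:
  "solves (extend_valuation k) (rename_sys \<rho> (scope M))"
proof -
  have "extend_valuation k (\<rho> y) = scope_solution y" if "y \<in> vars_sys (scope M)" for y
    using moves_scope_M[OF that] involution
    by (simp add: extend_valuation_def pointfree_idE)
  then have "solves (extend_valuation k \<circ> \<rho>) (scope M) = solves scope_solution (scope M)"
    by (intro solves_cong) simp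
  then have "solves (extend_valuation k \<circ> \<rho>) (scope M)"
    using solves_scope_solution by simp
  then show ?thesis
    by (simp add: solves_rename_sys bij_\<rho>)
qed

lemma extend_valuation_solves_scope_P: "solves (extend_valuation k) (scope P)"
proof -
  have "extend_valuation k x = scope_solution x" if "x \<in> vars_sys (scope P)" for x
    using that disj_P fresh_vars_notin fixes_P_T
    by (auto simp: extend_valuation_def edge_vars_def)
  then have "solves (extend_valuation k) (scope P) = solves scope_solution (scope P)"
    by (intro solves_cong) simp
  then show ?thesis
    using solves_scope_solution entails_scope_P by (simp add: entails_def)
qed

lemma extend_valuation_solves_count_eqns: "solves (extend_valuation k) count_eqns"
  unfolding count_eqns_def solves_UN by (simp add: solves_eqn_iff lhs_ind extend_valuation_r')

lemma extend_valuation_solves: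
  assumes "solves k (Sipet q \<union> S_flow q M)"
  shows "solves (extend_valuation k) witness_scope"
proof -
  have "vars_sys (Sipet q) \<subseteq> edge_vars" "vars_sys (S_flow q M) \<subseteq> edge_vars"
    using q vars_sys_S_flow[of q M] by (auto simp: query_program_def edge_vars_def)
  then have "solves (extend_valuation k) (Sipet q)" "solves (extend_valuation k) (S_flow q M)"
    using assms by (auto simp: solves_Un extend_valuation_solves_edge_sys)
  moreover from this(2) have "solves (extend_valuation k) (S_merge q r')"
    by (rule solves_S_merge[OF finite_cfgE]) (simp add: extend_valuation_r')
  ultimately show ?thesis
    unfolding witness_scope_def solves_Un
    using extend_valuation_solves_rename_scope extend_valuation_solves_scope_P
      extend_valuation_solves_count_eqns by blast
qed

lemma g_ipet_extend_valuation: "g_ipet q (extend_valuation k) = g_ipet q k"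
  by (rule g_ipet_cong) (simp add: extend_valuation_edge edge_vars_def)

lemma wf_witness_scope: "wf_sys witness_scope"
proof -
  have "wf_sys (scope M)" "wf_sys (Sipet q)"
    using concrete_M q by (simp_all add: concrete_def wf_pmodel_def query_program_def)
  moreover have "wf_sys count_eqns"
    unfolding count_eqns_def using T finite_Psi[OF finite_bbs]
    by (intro wf_sys_UN wf_sys_eqn finite_support_ind) auto
  ultimately show ?thesis
    unfolding witness_scope_def using P finite_bbs finite_cfgE
    by (intro wf_sys_Un wf_sys_rename_sys[OF bij_\<rho>] wf_sys_S_merge wf_sys_S_flow)
       (simp_all add: wf_pmodel_def)
qed

lemma witness_solution_in_solutions:
  "witness_solution \<in> solutions (witness_model q r' P) (witness_theory q T r')"
proof -
  obtain k where "solves k (Sipet q \<union> S_flow q M)"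
    using run_counts_solve_flow[OF q concrete_M] ..
  then have "concrete witness_solution"
    using concrete_M wf_witness_scope extend_valuation_solves
    by (auto simp: concrete_def wf_pmodel_def witness_solution_def)
  moreover obtain ab where "refines_via P ab M"
    using M by (auto simp: solutions_def refines_def)
  then have "refines (witness_model q r' P) witness_solution"
    unfolding refines_def witness_model_def witness_solution_def
    by (auto intro!: refines_via_scope_update entails_subset simp: witness_scope_def)
  moreover have "compatible witness_solution (witness_theory q T r')"
    by (rule compatible_if_eqns_in_scope)
       (auto simp: witness_theory_def witness_solution_def witness_scope_def count_eqns_def)
  ultimately show ?thesis
    by (simp add: solutions_def)
qed

lemma refines_witness_solution: "refines (rename_pm \<rho> M) witness_solution"
  unfolding refines_def rename_pm_def witness_solution_def
  by (auto intro!: refines_via_scope_update[OF refines_via_id] entails_subset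
      simp: witness_scope_def)

lemma DS_witness_solution: "DS q witness_solution = DS q M"
  by (simp add: DS_def witness_solution_def)

lemma DS_eq_g_witness: "DS q witness_solution = g_witness q witness_solution"
proof -
  have "{g_ipet q k | k. solves k (Sipet q \<union> S_flow q M)}
      = {g_ipet q k | k. solves k witness_scope}"
  proof (intro equalityI subsetI; clarify)
    fix k assume "solves k (Sipet q \<union> S_flow q M)"
    then show "\<exists>k'. g_ipet q k = g_ipet q k' \<and> solves k' witness_scope"
      using extend_valuation_solves g_ipet_extend_valuation by metis
  next
    fix k assume "solves k witness_scope"
    then show "\<exists>k'. g_ipet q k = g_ipet q k' \<and> solves k' (Sipet q \<union> S_flow q M)"
      by (auto simp: witness_scope_def solves_Un)
  qed
  then show ?thesis
    by (simp add: DS_def g_witness_def witness_solution_def)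
qed

end

theorem lemmaA5:
  fixes q :: "('bb, 'n, 'c, 'r, 'v, 'x, 'm) qprog"
    and P :: "('c, 'r, 'o, 'x) pmodel"
    and T :: "('c, 'r, 'v, 'x) fotheory"
    and r' :: "('c, 'r, 'v) fo \<Rightarrow> 'x"
    and M :: "('c, 'r, 'm, 'x) pmodel"
  assumes reserve: "infinite (UNIV :: 'x set)"
    and q: "query_program q"
    and P: "wf_pmodel P"
    and T: "finite (fst T)"
    and disj_r: "evar q ` cfgE q \<inter> snd T ` fst T = {}"
    and disj_P: "evar q ` cfgE q \<inter> vars_sys (scope P) = {}"
    and r': "fresh_ext q P T r'"
    and M: "M \<in> solutions P T"
  shows "\<exists>rename M'. bij rename \<and> stationary rename T
           \<and> M' \<in> solutions (witness_model q r' P) (witness_theory q T r')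
           \<and> refines (rename_pm rename M) M'
           \<and> DS q M = DS q M' \<and> DS q M' = g_witness q M'"
proof -
  interpret witness_generation q P T r' M
    using q P T disj_r disj_P r' M by unfold_locales
  obtain \<rho> where "\<rho> \<circ> \<rho> = id"
    and "\<And>y. y \<in> vars_sys (scope M) \<Longrightarrow> \<rho> y \<notin> edge_vars \<union> fresh_vars"
    and "\<And>x. x \<in> vars_sys (scope P) \<union> snd T ` fst T \<Longrightarrow> \<rho> x = x"
    using obtain_renaming[OF reserve] by metis
  then interpret witness_renaming q P T r' M \<rho>
    by unfold_locales
  show ?thesis
    using bij_\<rho> stationary_\<rho> witness_solution_in_solutions refines_witness_solution
      DS_witness_solution DS_eq_g_witness by (intro exI[of _ \<rho>] exI[of _ witness_solution]) simp
qed

end
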